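(* Let $\gamma:\mathbb{Z}\to\mathbb{R}^3$ be a discrete curve whose vertices $\gamma_i$ all lie in a common affine plane $P\subset\mathbb{R}^3$. Let $i\in\mathbb{Z}$, and assume that the discrete curvature $\kappa_i$, the normal vector $N_i$ and the discrete torsion $\tau_i$ of $\gamma$ at $\gamma_i$ (defined in the context) are well defined. Then $\tau_i=0$. Consequently, whenever the discrete torsion of a planar discrete curve is defined, it vanishes at every vertex.
   Context: Quaternions: $\mathbb{H}=\{[r,v]: r\in\mathbb{R},\ v\in\mathbb{R}^3\}$ with $[r,v]+[s,w]=[r+s,v+w]$, $[r,v]\cdot[s,w]=[rs-\langle v,w\rangle,\ rw+sv+v\times w]$, conjugate $\overline{[r,v]}=[r,-v]$, norm $|q|=\sqrt{q\bar q}=\sqrt{r^2+\|v\|^2}$, inverse $q^{-1}=\bar q/|q|^2$. The imaginary part of $q=[r,v]$ is $\operatorname{Im} q=v$, and $\mathbb{R}^3$ is identified with the pure imaginary quaternions $\{[0,v]\}$. Every $q$ has a polar form $q=|q|[\cos\phi,\,u\sin\phi]$ with $\|u\|=1$, $\phi\in[0,\pi]$, and $\sqrt{q}:=\sqrt{|q|}[\cos\frac{\phi}{2},\,u\sin\frac{\phi}{2}]$ (used only for $q\notin\mathbb{R}_{\le 0}$). Cross-ratio: $\operatorname{cr}(a,b,c,d)=(a-b)(b-c)^{-1}(c-d)(d-a)^{-1}$. "Diagonal point": $f(a,b,c,d)=\big((b-a)(c-a)^{-1}\sqrt{\operatorname{cr}(c,a,b,d)}+1\big)^{-1}\big((b-a)(c-a)^{-1}\sqrt{\operatorname{cr}(c,a,b,d)}\,c+b\big)$.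 A discrete curve is a map $\gamma:\mathbb{Z}\to\mathbb{R}^3$, $i\mapsto\gamma_i$. For a vertex $\gamma_i$ define the inserting points $A_i=f(\gamma_{i+2},\gamma_{i-1},\gamma_i,\gamma_{i+1})$, $B_i=f(\gamma_{i-1},\gamma_i,\gamma_{i+1},\gamma_{i+2})$, $C_i=f(\gamma_i,\gamma_{i+1},\gamma_{i+2},\gamma_{i-1})$, $D_i=f(\gamma_{i+1},\gamma_{i+2},\gamma_{i-1},\gamma_i)$; these are pure imaginary, i.e. points of $\mathbb{R}^3$, and are concyclic. The osculating circle $k_i$ of $\gamma$ at $\gamma_i$ is the circle through $A_i,B_i,C_i,D_i$; the discrete curvature $\kappa_i$ is the inverse of its radius; the normal vector $N_i$ is the unit normal vector of $k_i$ at $B_i$ (the unit vector in the plane of $k_i$ along the radius through $B_i$). The discrete torsion at $\gamma_i$ is $\tau_i=-\dfrac{9\,\langle \operatorname{Im}\operatorname{cr}(\gamma_{i-1},\gamma_i,\gamma_{i+1},\gamma_{i+2}),\,N_i\rangle}{2\kappa_i\,\|\gamma_i-\gamma_{i+1}\|^2}.$ "Well defined" means that all inverses and square roots above exist (vertices $\gamma_{i-1},\dots,\gamma_{i+2}$ pairwise distinct, no relevant cross-ratio is a non-positive real), and that $A_i,B_i,C_i,D_i$ determine a circle of positive finite radius. *)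

theory Defs
  imports "HOL-Analysis.Analysis"
begin

type_synonym quat = "real \<times> (real^3)"

definition qadd :: "quat \<Rightarrow> quat \<Rightarrow> quat" where
  "qadd p q = (fst p + fst q, snd p + snd q)"

definition qsub :: "quat \<Rightarrow> quat \<Rightarrow> quat" where
  "qsub p q = (fst p - fst q, snd p - snd q)"

definition qmul :: "quat \<Rightarrow> quat \<Rightarrow> quat" where
  "qmul p q = (fst p * fst q - inner (snd p) (snd q),
               fst p *\<^sub>R snd q + fst q *\<^sub>R snd p + cross3 (snd p) (snd q))"

definition qconj :: "quat \<Rightarrow> quat" where
  "qconj q = (fst q, - snd q)"

definition qnorm :: "quat \<Rightarrow> real" where
  "qnorm q = sqrt ((fst q)\<^sup>2 + (norm (snd q))\<^sup>2)"

definition qinv :: "quat \<Rightarrow> quat" where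
  "qinv q = (fst q / (qnorm q)\<^sup>2, - ((1 / (qnorm q)\<^sup>2) *\<^sub>R snd q))"

definition qone :: quat where "qone = (1, 0)"

definition qpure :: "real^3 \<Rightarrow> quat" where "qpure v = (0, v)"

definition qIm :: "quat \<Rightarrow> real^3" where "qIm q = snd q"

text \<open>Square root via the polar form q = |q| [cos phi, u sin phi], phi in [0,pi], |u| = 1:
  sqrt q = sqrt|q| [cos(phi/2), u sin(phi/2)].  (Only used for q not a non-positive real.
  If Im q = 0 then phi = 0 and the choice of u is irrelevant.)\<close>
definition qsqrt :: "quat \<Rightarrow> quat" where
  "qsqrt q = (let \<phi> = arccos (fst q / qnorm q);
                  u = (1 / norm (snd q)) *\<^sub>R snd q
              in (sqrt (qnorm q) * cos (\<phi> / 2), (sqrt (qnorm q) * sin (\<phi> / 2)) *\<^sub>R u))"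

definition nonpos_real :: "quat \<Rightarrow> bool" where
  "nonpos_real q \<longleftrightarrow> snd q = 0 \<and> fst q \<le> 0"

definition qcr :: "quat \<Rightarrow> quat \<Rightarrow> quat \<Rightarrow> quat \<Rightarrow> quat" where
  "qcr a b c d = qmul (qmul (qmul (qsub a b) (qinv (qsub b c))) (qsub c d)) (qinv (qsub d a))"

definition diagX :: "quat \<Rightarrow> quat \<Rightarrow> quat \<Rightarrow> quat \<Rightarrow> quat" where
  "diagX a b c d = qmul (qmul (qsub b a) (qinv (qsub c a))) (qsqrt (qcr c a b d))"

definition diagf :: "quat \<Rightarrow> quat \<Rightarrow> quat \<Rightarrow> quat \<Rightarrow> quat" where
  "diagf a b c d = qmul (qinv (qadd (diagX a b c d) qone)) (qadd (qmul (diagX a b c d) c) b)"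

definition diagf_defined :: "quat \<Rightarrow> quat \<Rightarrow> quat \<Rightarrow> quat \<Rightarrow> bool" where
  "diagf_defined a b c d \<longleftrightarrow>
     distinct [a, b, c, d] \<and> \<not> nonpos_real (qcr c a b d)
     \<and> qadd (diagX a b c d) qone \<noteq> (0, 0)"

type_synonym dcurve = "int \<Rightarrow> real^3"

definition gq :: "dcurve \<Rightarrow> int \<Rightarrow> quat" where "gq \<gamma> j = qpure (\<gamma> j)"

definition ptA :: "dcurve \<Rightarrow> int \<Rightarrow> real^3" where
  "ptA \<gamma> i = qIm (diagf (gq \<gamma> (i+2)) (gq \<gamma> (i-1)) (gq \<gamma> i) (gq \<gamma> (i+1)))"
definition ptB :: "dcurve \<Rightarrow> int \<Rightarrow> real^3" where
  "ptB \<gamma> i = qIm (diagf (gq \<gamma> (i-1)) (gq \<gamma> i) (gq \<gamma> (i+1)) (gq \<gamma> (i+2)))"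
definition ptC :: "dcurve \<Rightarrow> int \<Rightarrow> real^3" where
  "ptC \<gamma> i = qIm (diagf (gq \<gamma> i) (gq \<gamma> (i+1)) (gq \<gamma> (i+2)) (gq \<gamma> (i-1)))"
definition ptD :: "dcurve \<Rightarrow> int \<Rightarrow> real^3" where
  "ptD \<gamma> i = qIm (diagf (gq \<gamma> (i+1)) (gq \<gamma> (i+2)) (gq \<gamma> (i-1)) (gq \<gamma> i))"

definition inserting_points :: "dcurve \<Rightarrow> int \<Rightarrow> (real^3) set" where
  "inserting_points \<gamma> i = {ptA \<gamma> i, ptB \<gamma> i, ptC \<gamma> i, ptD \<gamma> i}"

definition circle_through :: "(real^3) set \<Rightarrow> real^3 \<Rightarrow> real \<Rightarrow> bool" where
  "circle_through S c \<rho> \<longleftrightarrow> 0 < \<rho> \<and> c \<in> affine hull S \<and> (\<forall>x\<in>S. dist x c = \<rho>)"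

text \<open>Osculating circle k_i: the (unique, when well defined) circle through A_i,B_i,C_i,D_i.\<close>
definition osc_center :: "dcurve \<Rightarrow> int \<Rightarrow> real^3" where
  "osc_center \<gamma> i = fst (THE (c, \<rho>). circle_through (inserting_points \<gamma> i) c \<rho>)"
definition osc_radius :: "dcurve \<Rightarrow> int \<Rightarrow> real" where
  "osc_radius \<gamma> i = snd (THE (c, \<rho>). circle_through (inserting_points \<gamma> i) c \<rho>)"

definition dcurvature :: "dcurve \<Rightarrow> int \<Rightarrow> real" where
  "dcurvature \<gamma> i = 1 / osc_radius \<gamma> i"
definition dnormal :: "dcurve \<Rightarrow> int \<Rightarrow> real^3" where
  "dnormal \<gamma> i = (1 / osc_radius \<gamma> i) *\<^sub>R (osc_center \<gamma> i - ptB \<gamma> i)"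

definition dtorsion :: "dcurve \<Rightarrow> int \<Rightarrow> real" where
  "dtorsion \<gamma> i =
     - (9 * inner (qIm (qcr (gq \<gamma> (i-1)) (gq \<gamma> i) (gq \<gamma> (i+1)) (gq \<gamma> (i+2)))) (dnormal \<gamma> i))
     / (2 * dcurvature \<gamma> i * (norm (\<gamma> i - \<gamma> (i+1)))\<^sup>2)"

definition torsion_well_defined :: "dcurve \<Rightarrow> int \<Rightarrow> bool" where
  "torsion_well_defined \<gamma> i \<longleftrightarrow>
     distinct [\<gamma> (i-1), \<gamma> i, \<gamma> (i+1), \<gamma> (i+2)]
     \<and> diagf_defined (gq \<gamma> (i+2)) (gq \<gamma> (i-1)) (gq \<gamma> i) (gq \<gamma> (i+1))
     \<and> diagf_defined (gq \<gamma> (i-1)) (gq \<gamma> i) (gq \<gamma> (i+1)) (gq \<gamma> (i+2))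
     \<and> diagf_defined (gq \<gamma> i) (gq \<gamma> (i+1)) (gq \<gamma> (i+2)) (gq \<gamma> (i-1))
     \<and> diagf_defined (gq \<gamma> (i+1)) (gq \<gamma> (i+2)) (gq \<gamma> (i-1)) (gq \<gamma> i)
     \<and> card (inserting_points \<gamma> i) \<ge> 3
     \<and> (\<exists>c \<rho>. circle_through (inserting_points \<gamma> i) c \<rho>)"

end

theory Submission
  imports Defs
begin

text \<open>Let the plane be \<open>{x. x \<bullet> n = h}\<close>. Quaternions then split into the commutative subalgebra
  spanned by \<open>1\<close> and \<open>n\<close> (a copy of the complex numbers) and the pure quaternions orthogonal
  to \<open>n\<close>, and multiplication respects this splitting like a \<open>\<int>/2\<close>-grading. Differences of
  vertices are of the second kind, so every cross-ratio of vertices is of the first kind: its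
  imaginary part is parallel to \<open>n\<close>. The same bookkeeping shows that the diagonal points, hence
  the osculating circle and the normal vector \<open>N\<^sub>i\<close>, lie in the plane, so \<open>N\<^sub>i \<perp> n\<close> and the
  inner product in the torsion vanishes.\<close>

lemma cross3_cross3_left: "cross3 (cross3 v w) u = (inner v u) *\<^sub>R w - (inner w u) *\<^sub>R v"
  by (simp add: cross3_simps forall_3)

lemma cross3_cross3_right: "cross3 v (cross3 w u) = (inner v u) *\<^sub>R w - (inner v w) *\<^sub>R u"
  by (simp add: cross3_simps forall_3)

lemma inner_cross3_cyclic: "inner v (cross3 w u) = inner u (cross3 v w)"
  by (simp add: cross3_simps)

lemma cross3_parallel_if_orthogonal:
  assumes "n \<noteq> 0" "inner v n = 0" "inner w n = 0"
  shows "\<exists>t. cross3 v w = t *\<^sub>R n"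
proof -
  let ?x = "cross3 v w"
  have "cross3 n ?x = 0"
    using assms by (simp add: cross3_cross3_right inner_commute)
  then have "(inner n n) *\<^sub>R ?x = (inner n ?x) *\<^sub>R n"
    using cross3_cross3_right[of n n ?x] by simp
  then have "?x = (inner n ?x / inner n n) *\<^sub>R n"
    using assms(1) by (metis inner_eq_zero_iff scaleR_scaleR divide_inverse_commute
        field_class.field_inverse scaleR_one)
  then show ?thesis by blast
qed

lemma qmul_assoc: "qmul (qmul p q) r = qmul p (qmul q r)"
  by (cases p; cases q; cases r)
    (simp add: qmul_def inner_add_left inner_add_right cross_add_left cross_add_right
      cross_mult_left cross_mult_right cross3_cross3_left cross3_cross3_right
      inner_cross3_cyclic inner_commute algebra_simps)

lemma qmul_qadd_distrib_left: "qmul p (qadd q r) = qadd (qmul p q) (qmul p r)"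
  by (simp add: qmul_def qadd_def cross_add_right inner_add_right algebra_simps)

lemma qmul_qadd_distrib_right: "qmul (qadd q r) p = qadd (qmul q p) (qmul r p)"
  by (simp add: qmul_def qadd_def cross_add_left inner_add_left algebra_simps)

lemma qmul_qone_left: "qmul qone p = p"
  by (simp add: qmul_def qone_def)

lemma qmul_qinv_left:
  assumes "q \<noteq> (0, 0)"
  shows "qmul (qinv q) q = qone"
proof (cases q)
  case (Pair a v)
  have "qnorm (a, v) * qnorm (a, v) = a * a + inner v v"
    by (simp add: qnorm_def power2_norm_eq_inner flip: power2_eq_square)
  moreover have "a * a + inner v v \<noteq> 0"
    using assms Pair by (simp add: add_nonneg_eq_0_iff)
  ultimately show ?thesis
    using Pair by (auto simp: qinv_def qmul_def qone_def cross_mult_left power2_eq_square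
        add_divide_distrib[symmetric])
qed

definition complex_along :: "real^3 \<Rightarrow> quat \<Rightarrow> bool" where
  "complex_along n q \<longleftrightarrow> (\<exists>t. snd q = t *\<^sub>R n)"

definition pure_orthogonal :: "real^3 \<Rightarrow> quat \<Rightarrow> bool" where
  "pure_orthogonal n q \<longleftrightarrow> fst q = 0 \<and> inner (snd q) n = 0"

lemma complex_along_qmul: "complex_along n p \<Longrightarrow> complex_along n q \<Longrightarrow> complex_along n (qmul p q)"
  unfolding complex_along_def qmul_def
  by (auto simp: cross_mult_left cross_mult_right) (metis scaleR_add_left scaleR_scaleR)

lemma complex_along_qmul_pure_orthogonal:
  "n \<noteq> 0 \<Longrightarrow> pure_orthogonal n p \<Longrightarrow> pure_orthogonal n q \<Longrightarrow> complex_along n (qmul p q)"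
  unfolding complex_along_def pure_orthogonal_def qmul_def
  using cross3_parallel_if_orthogonal by auto

lemma pure_orthogonal_qmul_left:
  "complex_along n p \<Longrightarrow> pure_orthogonal n q \<Longrightarrow> pure_orthogonal n (qmul p q)"
  unfolding complex_along_def pure_orthogonal_def qmul_def
  by (auto simp: cross_mult_left inner_add_left inner_add_right inner_commute inner_cross3_cyclic
      dot_cross_self)

lemma complex_along_qinv: "complex_along n p \<Longrightarrow> complex_along n (qinv p)"
  unfolding complex_along_def qinv_def by auto (metis scaleR_minus_left scaleR_scaleR)

lemma pure_orthogonal_qinv: "pure_orthogonal n p \<Longrightarrow> pure_orthogonal n (qinv p)"
  unfolding pure_orthogonal_def qinv_def by auto

lemma complex_along_qadd: "complex_along n p \<Longrightarrow> complex_along n q \<Longrightarrow> complex_along n (qadd p q)"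
  unfolding complex_along_def qadd_def by (auto simp flip: scaleR_add_left)

lemma pure_orthogonal_qadd: "pure_orthogonal n p \<Longrightarrow> pure_orthogonal n q \<Longrightarrow> pure_orthogonal n (qadd p q)"
  unfolding pure_orthogonal_def qadd_def by (auto simp: inner_add_left)

lemma complex_along_qone: "complex_along n qone"
  unfolding complex_along_def qone_def by (auto intro: exI[of _ 0])

lemma complex_along_qsqrt: "complex_along n p \<Longrightarrow> complex_along n (qsqrt p)"
  unfolding complex_along_def qsqrt_def Let_def by auto

lemma pure_orthogonal_qsub_qpure:
  "inner a n = h \<Longrightarrow> inner b n = h \<Longrightarrow> pure_orthogonal n (qsub (qpure a) (qpure b))"
  unfolding pure_orthogonal_def qsub_def qpure_def by (auto simp: inner_diff_left)

lemma complex_along_qcr: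
  assumes "n \<noteq> 0" "inner a n = h" "inner b n = h" "inner c n = h" "inner d n = h"
  shows "complex_along n (qcr (qpure a) (qpure b) (qpure c) (qpure d))"
  unfolding qcr_def using assms
  by (intro complex_along_qmul_pure_orthogonal pure_orthogonal_qmul_left
      pure_orthogonal_qinv pure_orthogonal_qsub_qpure) auto

lemma complex_along_diagX:
  assumes "n \<noteq> 0" "inner a n = h" "inner b n = h" "inner c n = h" "inner d n = h"
  shows "complex_along n (diagX (qpure a) (qpure b) (qpure c) (qpure d))"
  unfolding diagX_def using assms
  by (intro complex_along_qmul complex_along_qsqrt complex_along_qcr
      complex_along_qmul_pure_orthogonal pure_orthogonal_qinv pure_orthogonal_qsub_qpure) auto

lemma diagf_in_plane:
  assumes n: "n \<noteq> 0"
    and abcd: "inner a n = h" "inner b n = h" "inner c n = h" "inner d n = h"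
    and defined: "qadd (diagX (qpure a) (qpure b) (qpure c) (qpure d)) qone \<noteq> (0, 0)"
  shows "inner (qIm (diagf (qpure a) (qpure b) (qpure c) (qpure d))) n = h"
proof -
  define X where "X = diagX (qpure a) (qpure b) (qpure c) (qpure d)"
  define Y where "Y = qadd X qone"
  define m where "m = (h / inner n n) *\<^sub>R n"
  have X: "complex_along n X"
    unfolding X_def using complex_along_diagX[OF assms(1-5)] .
  have Y: "complex_along n Y"
    unfolding Y_def by (intro complex_along_qadd X complex_along_qone)
  have m: "inner m n = h"
    using n by (simp add: m_def)
  \<comment> \<open>Writing \<open>b, c\<close> as the foot \<open>m\<close> of the plane plus a vector in the plane gives
    \<open>X c + b = Y m + Z\<close> with \<open>Z\<close> orthogonal to \<open>n\<close>, so \<open>f = Y\<inverse> (X c + b) = m + Y\<inverse> Z\<close>.\<close>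
  define Z where "Z = qadd (qmul X (0, c - m)) (0, b - m)"
  have Z: "pure_orthogonal n Z"
    unfolding Z_def using abcd m
    by (intro pure_orthogonal_qadd pure_orthogonal_qmul_left X)
      (auto simp: pure_orthogonal_def inner_diff_left)
  have "qadd (qmul X (qpure c)) (qpure b) = qadd (qmul Y (0, m)) Z"
  proof -
    have bc: "qpure c = qadd (0, m) (0, c - m)" "qpure b = qadd (0, m) (0, b - m)"
      by (simp_all add: qpure_def qadd_def)
    show ?thesis
      unfolding bc Z_def Y_def qmul_qadd_distrib_left qmul_qadd_distrib_right qmul_qone_left
      by (simp add: qadd_def)
  qed
  then have "diagf (qpure a) (qpure b) (qpure c) (qpure d)
      = qadd (qmul (qmul (qinv Y) Y) (0, m)) (qmul (qinv Y) Z)"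
    by (simp add: diagf_def X_def[symmetric] Y_def[symmetric] qmul_qadd_distrib_left qmul_assoc)
  also have "\<dots> = qadd (0, m) (qmul (qinv Y) Z)"
    using defined by (simp add: Y_def X_def qmul_qinv_left qmul_qone_left)
  finally have "diagf (qpure a) (qpure b) (qpure c) (qpure d) = qadd (0, m) (qmul (qinv Y) Z)" .
  moreover have "pure_orthogonal n (qmul (qinv Y) Z)"
    by (intro pure_orthogonal_qmul_left complex_along_qinv Y Z)
  ultimately show ?thesis
    using m by (simp add: qIm_def qadd_def pure_orthogonal_def inner_add_left)
qed

lemma circle_through_unique:
  assumes 1: "circle_through S c1 r1" and 2: "circle_through S c2 r2"
  shows "c1 = c2 \<and> r1 = r2"
proof -
  obtain a where a: "a \<in> S"
    using 1 unfolding circle_through_def by fastforce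
  let ?D = "span ((\<lambda>x. -a + x) ` (S - {a}))"
  obtain v1 v2 where v: "v1 \<in> ?D" "v2 \<in> ?D" "c1 = a + v1" "c2 = a + v2"
    using 1 2 affine_hull_span2[OF a] unfolding circle_through_def by auto
  \<comment> \<open>Both centres are equidistant from \<open>a\<close> and \<open>x\<close>, so \<open>c1 - c2 \<perp> x - a\<close>.\<close>
  have "orthogonal (v1 - v2) y" if y: "y \<in> (\<lambda>x. -a + x) ` (S - {a})" for y
  proof -
    obtain x where x: "x \<in> S" "y = x - a"
      using y by auto
    have sq: "inner (x - c) (x - c) = r\<^sup>2" "inner (a - c) (a - c) = r\<^sup>2"
      if "circle_through S c r" for c r
      using that x a unfolding circle_through_def dist_norm
      by (auto simp flip: power2_norm_eq_inner)
    have "inner (x - a) (c1 - c2) = 0"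
      using sq[OF 1] sq[OF 2] by (simp add: inner_diff_left inner_diff_right inner_commute algebra_simps)
    then show ?thesis
      using v x unfolding orthogonal_def by (simp add: inner_commute)
  qed
  moreover have "v1 - v2 \<in> ?D"
    using v by (simp add: span_diff)
  ultimately have "orthogonal (v1 - v2) (v1 - v2)"
    by (simp add: orthogonal_to_span)
  then have "c1 = c2"
    using v unfolding orthogonal_def by simp
  with 1 2 a show ?thesis
    unfolding circle_through_def by auto
qed

lemma osc_circle_eq:
  assumes "circle_through (inserting_points \<gamma> i) c \<rho>"
  shows "osc_center \<gamma> i = c" "osc_radius \<gamma> i = \<rho>"
proof -
  have "(THE (c, \<rho>). circle_through (inserting_points \<gamma> i) c \<rho>) = (c, \<rho>)"
    by (rule the_equality) (use assms circle_through_unique in auto)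
  then show "osc_center \<gamma> i = c" "osc_radius \<gamma> i = \<rho>"
    unfolding osc_center_def osc_radius_def by simp_all
qed

lemma inserting_points_in_plane:
  assumes n: "n \<noteq> 0" and \<gamma>: "\<And>j. inner (\<gamma> j) n = h" and wd: "torsion_well_defined \<gamma> i"
  shows "inserting_points \<gamma> i \<subseteq> {x. inner x n = h}"
  using wd unfolding torsion_well_defined_def diagf_defined_def inserting_points_def
    ptA_def ptB_def ptC_def ptD_def gq_def
  by (auto intro!: diagf_in_plane[OF n] \<gamma>)

lemma dnormal_orthogonal_plane:
  assumes n: "n \<noteq> 0" and \<gamma>: "\<And>j. inner (\<gamma> j) n = h" and wd: "torsion_well_defined \<gamma> i"
  shows "inner (dnormal \<gamma> i) n = 0"
proof -
  let ?S = "inserting_points \<gamma> i"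
  obtain c \<rho> where c: "circle_through ?S c \<rho>"
    using wd unfolding torsion_well_defined_def by blast
  have plane: "?S \<subseteq> {x. inner x n = h}"
    using inserting_points_in_plane[OF assms] .
  have "affine {x. inner x n = h}"
    using affine_hyperplane[of n h] by (simp add: inner_commute)
  then have "inner c n = h"
    using c hull_minimal[OF plane] unfolding circle_through_def by auto
  moreover have "inner (ptB \<gamma> i) n = h"
    using plane unfolding inserting_points_def by auto
  ultimately show ?thesis
    unfolding dnormal_def osc_circle_eq[OF c] by (simp add: inner_diff_left)
qed

theorem mainTheorem1:
  fixes \<gamma> :: "int \<Rightarrow> real^3" and P :: "(real^3) set" and i :: int
  assumes "affine P" and "aff_dim P = 2"
    and "\<forall>j. \<gamma> j \<in> P"
    and "torsion_well_defined \<gamma> i"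
  shows "dtorsion \<gamma> i = 0"
proof -
  obtain n h where n: "n \<noteq> 0" and "affine hull P = {x. n \<bullet> x = h}"
    using assms(2) aff_dim_eq_hyperplane[of P] by auto
  then have "P = {x. inner x n = h}"
    using affine_hull_eq[THEN iffD2, OF assms(1)] by (simp add: inner_commute)
  then have \<gamma>: "inner (\<gamma> j) n = h" for j
    using assms(3) by auto
  obtain t where "qIm (qcr (gq \<gamma> (i-1)) (gq \<gamma> i) (gq \<gamma> (i+1)) (gq \<gamma> (i+2))) = t *\<^sub>R n"
    using complex_along_qcr[OF n \<gamma>[of "i-1"] \<gamma>[of i] \<gamma>[of "i+1"] \<gamma>[of "i+2"]]
    unfolding complex_along_def qIm_def gq_def by auto
  then show ?thesis
    using dnormal_orthogonal_plane[OF n \<gamma> assms(4)] by (simp add: dtorsion_def inner_commute)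
qed

end
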